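(* Let $(X,P,o)$ be a generalized parametric metric space such that $P$ satisfies (P5) and $o$ is continuous. Then $(X,\tau_P)$ is normal: for any two disjoint closed sets $A,B\subseteq X$ there exist disjoint $U,V\in\tau_P$ with $A\subseteq U$ and $B\subseteq V$.
   Context: A binary operation $o:[0,\infty)\times[0,\infty)\to[0,\infty)$ (written $\alpha\, o\, \beta$) is assumed to satisfy, for all $\alpha,\beta,\gamma\in[0,\infty)$: (a) $\alpha\, o\, 0=\alpha$; (b) $\alpha\le\beta\implies \alpha\, o\,\gamma\le\beta\, o\,\gamma$; (c) $\alpha\, o\,\gamma=\gamma\, o\,\alpha$; (d) $\alpha\, o\,(\beta\, o\,\gamma)=(\alpha\, o\,\beta)\, o\,\gamma$. It is continuous if whenever $\alpha_n\to\alpha$ and $\beta_n\to\beta$ in $[0,\infty)$ we have $\alpha_n\, o\,\beta_n\to\alpha\, o\,\beta$. A generalized parametric metric on a nonempty set $X$ is a function $P:X\times X\times(0,\infty)\to[0,\infty)$ such that: (P1) $P(a,b,t)=0$ for all $t>0$ if and only if $a=b$; (P2) $P(a,b,t)=P(b,a,t)$ for all $a,b\in X$, $t>0$; (P3) $P(a,b,s+t)\le P(a,x,s)\, o\, P(b,x,t)$ for all $s,t>0$ and $a,b,x\in X$. The triple $(X,P,o)$ is a generalized parametric metric space. Condition (P5): for all $a,b\in X$, the map $t\mapsto P(a,b,t)$ is continuous on $(0,\infty)$. Open ball: $B(a,\alpha,t)=\{b\in X: P(a,b,t)<\alpha\}$. $\tau_P$ is the topology consisting of all $A\subseteq X$ such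 that for every $a\in A$ there exist $\alpha>0,t>0$ with $B(a,\alpha,t)\subseteq A$. A sequence $\{x_n\}$ converges to $x$ if $\lim_{n\to\infty}P(x_n,x,t)=0$ for all $t>0$. A set $A\subseteq X$ is closed if whenever a sequence in $A$ converges to some $x\in X$, then $x\in A$. *)

theory Defs
  imports "HOL-Analysis.Analysis"
begin

text \<open>A binary operation on [0,\<infinity>) (modelled as a real function, constrained on nonnegative reals).\<close>
definition gpm_operation :: "(real \<Rightarrow> real \<Rightarrow> real) \<Rightarrow> bool" where
  "gpm_operation op \<longleftrightarrow>
     (\<forall>a\<ge>0. \<forall>b\<ge>0. op a b \<ge> 0) \<and>
     (\<forall>a\<ge>0. op a 0 = a) \<and>
     (\<forall>a b c. 0 \<le> a \<longrightarrow> a \<le> b \<longrightarrow> 0 \<le> c \<longrightarrow> op a c \<le> op b c) \<and>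
     (\<forall>a\<ge>0. \<forall>c\<ge>0. op a c = op c a) \<and>
     (\<forall>a\<ge>0. \<forall>b\<ge>0. \<forall>c\<ge>0. op a (op b c) = op (op a b) c)"

definition op_continuous :: "(real \<Rightarrow> real \<Rightarrow> real) \<Rightarrow> bool" where
  "op_continuous op \<longleftrightarrow>
     (\<forall>a b (an :: nat \<Rightarrow> real) bn. (\<forall>n. an n \<ge> 0 \<and> bn n \<ge> 0) \<longrightarrow> a \<ge> 0 \<longrightarrow> b \<ge> 0 \<longrightarrow>
        an \<longlonglongrightarrow> a \<longrightarrow> bn \<longlonglongrightarrow> b \<longrightarrow> (\<lambda>n. op (an n) (bn n)) \<longlonglongrightarrow> op a b)"

text \<open>Generalized parametric metric space; the value of P at t \<le> 0 is irrelevant.\<close>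
definition gen_param_metric :: "('a \<Rightarrow> 'a \<Rightarrow> real \<Rightarrow> real) \<Rightarrow> (real \<Rightarrow> real \<Rightarrow> real) \<Rightarrow> bool" where
  "gen_param_metric P op \<longleftrightarrow> gpm_operation op \<and>
     (\<forall>a b t. t > 0 \<longrightarrow> P a b t \<ge> 0) \<and>
     (\<forall>a b. (\<forall>t>0. P a b t = 0) \<longleftrightarrow> a = b) \<and>
     (\<forall>a b t. t > 0 \<longrightarrow> P a b t = P b a t) \<and>
     (\<forall>a b x s t. s > 0 \<longrightarrow> t > 0 \<longrightarrow> P a b (s + t) \<le> op (P a x s) (P b x t))"

definition P5 :: "('a \<Rightarrow> 'a \<Rightarrow> real \<Rightarrow> real) \<Rightarrow> bool" where
  "P5 P \<longleftrightarrow> (\<forall>a b. continuous_on {0<..} (P a b))"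

definition pball :: "('a \<Rightarrow> 'a \<Rightarrow> real \<Rightarrow> real) \<Rightarrow> 'a \<Rightarrow> real \<Rightarrow> real \<Rightarrow> 'a set" where
  "pball P a \<alpha> t = {b. P a b t < \<alpha>}"

definition tauP :: "('a \<Rightarrow> 'a \<Rightarrow> real \<Rightarrow> real) \<Rightarrow> 'a set set" where
  "tauP P = {A. \<forall>a\<in>A. \<exists>\<alpha>>0. \<exists>t>0. pball P a \<alpha> t \<subseteq> A}"

definition pconverges :: "('a \<Rightarrow> 'a \<Rightarrow> real \<Rightarrow> real) \<Rightarrow> (nat \<Rightarrow> 'a) \<Rightarrow> 'a \<Rightarrow> bool" where
  "pconverges P xs x \<longleftrightarrow> (\<forall>t>0. (\<lambda>n. P (xs n) x t) \<longlonglongrightarrow> 0)"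

definition pclosed :: "('a \<Rightarrow> 'a \<Rightarrow> real \<Rightarrow> real) \<Rightarrow> 'a set \<Rightarrow> bool" where
  "pclosed P A \<longleftrightarrow> (\<forall>xs x. (\<forall>n. xs n \<in> A) \<longrightarrow> pconverges P xs x \<longrightarrow> x \<in> A)"

end

theory Submission
  imports Defs
begin

text \<open>
  Separate each point a of A from B by a scale e(a) = 1/(n(a) + 1) with
  e(a) \<le> P a b e(a) for all b \<in> B; it exists because otherwise a sequence in B
  would converge to a.  Choose radii d(n), decreasing in n, with d(n) o d(n) < 1/(n + 1),
  and let U be the union of the balls B(a, d(n(a)), e(a)/2), and symmetrically V.
  A common point z of the balls around a \<in> A and b \<in> B, say with e(b) \<le> e(a), gives
  P a b e(a) \<le> P a b (e(a)/2 + e(b)/2) \<le> P a z (e(a)/2) o P b z (e(b)/2) < e(a),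
  a contradiction.  Continuity of o and (P5) make the balls open.
\<close>

lemma op_continuous_perturb_less:
  assumes "op_continuous op" "0 \<le> a" "0 \<le> b" "op a b < \<alpha>"
  shows "\<exists>\<delta>>0. op (a + \<delta>) (b + \<delta>) < \<alpha>"
proof -
  let ?\<delta> = "\<lambda>n. inverse (real (Suc n))"
  have "(\<lambda>n. op (a + ?\<delta> n) (b + ?\<delta> n)) \<longlonglongrightarrow> op a b"
    using assms(1-3) LIMSEQ_inverse_real_of_nat_add[of a] LIMSEQ_inverse_real_of_nat_add[of b]
    unfolding op_continuous_def by (simp add: add_nonneg_nonneg)
  then have "eventually (\<lambda>n. op (a + ?\<delta> n) (b + ?\<delta> n) < \<alpha>) sequentially"
    using assms(4) by (rule order_tendstoD(2))
  then obtain n where "op (a + ?\<delta> n) (b + ?\<delta> n) < \<alpha>"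
    by (auto simp: eventually_sequentially)
  then show ?thesis
    by (intro exI[of _ "?\<delta> n"]) auto
qed

lemma P5_smaller_param_less:
  assumes "P5 P" "0 < t" "P a b t < \<alpha>"
  shows "\<exists>s. 0 < s \<and> s < t \<and> P a b s < \<alpha>"
proof -
  have "continuous_on {0<..} (P a b)"
    using assms(1) unfolding P5_def by blast
  then obtain \<delta> where "\<delta> > 0"
      and \<delta>: "\<And>s. s \<in> {0<..} \<Longrightarrow> dist s t < \<delta> \<Longrightarrow> dist (P a b s) (P a b t) < \<alpha> - P a b t"
    unfolding continuous_on_iff using assms(2,3) by (metis diff_gt_0_iff_gt greaterThan_iff)
  define s where "s = max (t / 2) (t - \<delta> / 2)"
  have "0 < s" "s < t" "dist s t < \<delta>"
    using assms(2) \<open>\<delta> > 0\<close> unfolding s_def dist_real_def by auto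
  with \<delta>[of s] show ?thesis
    by (auto simp: dist_real_def)
qed

lemma tauP_Union: "(\<And>S. S \<in> F \<Longrightarrow> S \<in> tauP P) \<Longrightarrow> \<Union>F \<in> tauP P"
  unfolding tauP_def by blast

locale gen_param_metric_space =
  fixes P :: "'a \<Rightarrow> 'a \<Rightarrow> real \<Rightarrow> real" and op :: "real \<Rightarrow> real \<Rightarrow> real"
  assumes gen_param_metric: "gen_param_metric P op"
begin

lemma P_nonneg: "0 < t \<Longrightarrow> 0 \<le> P a b t"
  using gen_param_metric unfolding gen_param_metric_def by (elim conjE) blast

lemma P_self: "0 < t \<Longrightarrow> P a a t = 0"
  using gen_param_metric unfolding gen_param_metric_def by (elim conjE) blast

lemma P_sym: "0 < t \<Longrightarrow> P a b t = P b a t"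
  using gen_param_metric unfolding gen_param_metric_def by (elim conjE) blast

lemma P_triangle: "0 < s \<Longrightarrow> 0 < t \<Longrightarrow> P a b (s + t) \<le> op (P a x s) (P b x t)"
  using gen_param_metric unfolding gen_param_metric_def by (elim conjE) blast

lemma gpm_operation: "gpm_operation op"
  using gen_param_metric unfolding gen_param_metric_def by (elim conjE)

lemma op_zero_right: "0 \<le> a \<Longrightarrow> op a 0 = a"
  using gpm_operation unfolding gpm_operation_def by (elim conjE) blast

lemma op_mono:
  assumes "0 \<le> a" "a \<le> a'" "0 \<le> b" "b \<le> b'"
  shows "op a b \<le> op a' b'"
proof -
  have mono_left: "op x z \<le> op y z" if "0 \<le> x" "x \<le> y" "0 \<le> z" for x y z
    using gpm_operation that unfolding gpm_operation_def by (elim conjE) blast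
  have comm: "op x z = op z x" if "0 \<le> x" "0 \<le> z" for x z
    using gpm_operation that unfolding gpm_operation_def by (elim conjE) blast
  have "op a b \<le> op a' b"
    using assms by (intro mono_left)
  also have "\<dots> = op b a'"
    using assms by (intro comm) auto
  also have "\<dots> \<le> op b' a'"
    using assms by (intro mono_left) auto
  also have "\<dots> = op a' b'"
    using assms by (intro comm) auto
  finally show ?thesis .
qed

lemma P_antimono:
  assumes "0 < s" "s \<le> t"
  shows "P a b t \<le> P a b s"
proof (cases "s = t")
  case False
  then have "0 < t - s"
    using assms by simp
  then have "P a b (s + (t - s)) \<le> op (P a b s) (P b b (t - s))"
    using P_triangle assms(1) by blast
  also have "\<dots> = P a b s"
    using P_self P_nonneg op_zero_right \<open>0 < t - s\<close> assms(1) by simp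
  finally show ?thesis
    by simp
qed simp

lemma centre_in_pball: "0 < \<alpha> \<Longrightarrow> 0 < t \<Longrightarrow> a \<in> pball P a \<alpha> t"
  unfolding pball_def using P_self by simp

lemma pball_open:
  assumes "P5 P" "op_continuous op" "0 < t"
  shows "pball P a \<alpha> t \<in> tauP P"
  unfolding tauP_def
proof clarify
  fix z
  assume "z \<in> pball P a \<alpha> t"
  then obtain s where s: "0 < s" "s < t" "P a z s < \<alpha>"
    using P5_smaller_param_less[OF assms(1,3)] unfolding pball_def by blast
  then have "op (P a z s) 0 < \<alpha>"
    using P_nonneg op_zero_right by simp
  obtain \<delta> where "\<delta> > 0" and \<delta>: "op (P a z s + \<delta>) \<delta> < \<alpha>"
    using op_continuous_perturb_less[OF assms(2) P_nonneg[OF s(1)] order_refl \<open>op (P a z s) 0 < \<alpha>\<close>]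
    by auto
  have "pball P z \<delta> (t - s) \<subseteq> pball P a \<alpha> t"
  proof
    fix w
    assume "w \<in> pball P z \<delta> (t - s)"
    then have w: "P w z (t - s) < \<delta>"
      using P_sym s(2) unfolding pball_def by simp
    have "P a w (s + (t - s)) \<le> op (P a z s) (P w z (t - s))"
      using s by (intro P_triangle) auto
    also have "\<dots> \<le> op (P a z s + \<delta>) \<delta>"
      using w s \<open>\<delta> > 0\<close> by (intro op_mono P_nonneg) auto
    finally show "w \<in> pball P a \<alpha> t"
      using \<delta> unfolding pball_def by simp
  qed
  then show "\<exists>\<alpha>'>0. \<exists>t'>0. pball P z \<alpha>' t' \<subseteq> pball P a \<alpha> t"
    using \<open>\<delta> > 0\<close> s(2) by (intro exI[of _ \<delta>] exI[of _ "t - s"] conjI) auto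
qed

lemma pclosed_scale_gap:
  assumes "pclosed P B" "a \<notin> B"
  shows "\<exists>n. \<forall>b\<in>B. inverse (real (Suc n)) \<le> P a b (inverse (real (Suc n)))"
proof (rule ccontr)
  let ?\<epsilon> = "\<lambda>n. inverse (real (Suc n))"
  assume "\<not> ?thesis"
  then have "\<forall>n. \<exists>b. b \<in> B \<and> P a b (?\<epsilon> n) < ?\<epsilon> n"
    by (auto simp: not_le)
  then obtain f where f: "\<And>n. f n \<in> B" "\<And>n. P a (f n) (?\<epsilon> n) < ?\<epsilon> n"
    by metis
  have "(\<lambda>n. P (f n) a t) \<longlonglongrightarrow> 0" if "0 < t" for t
  proof (rule tendsto_sandwich[OF _ _ tendsto_const LIMSEQ_inverse_real_of_nat])
    have "eventually (\<lambda>n. ?\<epsilon> n < t) sequentially"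
      using order_tendstoD(2)[OF LIMSEQ_inverse_real_of_nat \<open>0 < t\<close>] .
    then show "eventually (\<lambda>n. P (f n) a t \<le> ?\<epsilon> n) sequentially"
    proof eventually_elim
      case (elim n)
      have "P (f n) a t = P a (f n) t"
        using P_sym \<open>0 < t\<close> by simp
      also have "\<dots> \<le> P a (f n) (?\<epsilon> n)"
        using elim by (intro P_antimono) auto
      finally show ?case
        using f(2)[of n] by simp
    qed
    show "eventually (\<lambda>n. 0 \<le> P (f n) a t) sequentially"
      using P_nonneg \<open>0 < t\<close> by simp
  qed
  then have "pconverges P f a"
    unfolding pconverges_def by blast
  then show False
    using assms f(1) unfolding pclosed_def by blast
qed

lemma exists_decseq_op_diag_less:
  assumes "op_continuous op"
  shows "\<exists>d. decseq d \<and> (\<forall>n. 0 < d n) \<and> (\<forall>n. op (d n) (d n) < inverse (real (Suc n)))"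
proof -
  have "\<exists>\<delta>>0. op \<delta> \<delta> < inverse (real (Suc n))" for n
    using op_continuous_perturb_less[OF assms, of 0 0] op_zero_right by simp
  then obtain \<delta> where \<delta>: "\<And>n. 0 < \<delta> n" "\<And>n. op (\<delta> n) (\<delta> n) < inverse (real (Suc n))"
    by metis
  define d where "d n = Min (\<delta> ` {..n})" for n
  have d_le: "d n \<le> \<delta> n" and d_pos: "0 < d n" for n
    unfolding d_def using \<delta>(1) by auto
  have "decseq d"
    unfolding decseq_def d_def by (auto intro: Min_antimono)
  moreover have "op (d n) (d n) < inverse (real (Suc n))" for n
    using op_mono[OF less_imp_le[OF d_pos] d_le less_imp_le[OF d_pos] d_le] \<delta>(2)[of n]
    by (rule le_less_trans)
  ultimately show ?thesis
    using d_pos by blast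
qed

lemma P_scale_less_of_common_point:
  assumes d: "decseq d" "\<And>k. op (d k) (d k) < inverse (real (Suc k))" and "n \<le> m"
    and za: "P a z (inverse (real (Suc n)) / 2) < d n"
    and zb: "P b z (inverse (real (Suc m)) / 2) < d m"
  shows "P a b (inverse (real (Suc n))) < inverse (real (Suc n))"
proof -
  define s t where "s = inverse (real (Suc n)) / 2" and "t = inverse (real (Suc m)) / 2"
  have "0 < s" "0 < t" "t \<le> s"
    unfolding s_def t_def using \<open>n \<le> m\<close> by (auto simp: field_simps)
  have "P a b (inverse (real (Suc n))) \<le> P a b (s + t)"
    using \<open>0 < t\<close> \<open>t \<le> s\<close> by (intro P_antimono) (auto simp: s_def)
  also have "\<dots> \<le> op (P a z s) (P b z t)"
    using P_triangle \<open>0 < s\<close> \<open>0 < t\<close> by blast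
  also have "\<dots> \<le> op (d n) (d n)"
    using za zb decseqD[OF d(1) \<open>n \<le> m\<close>] P_nonneg \<open>0 < s\<close> \<open>0 < t\<close>
    by (intro op_mono) (auto simp: s_def t_def)
  also have "\<dots> < inverse (real (Suc n))"
    using d(2) .
  finally show ?thesis .
qed

definition scaled_nbhd :: "(nat \<Rightarrow> real) \<Rightarrow> ('a \<Rightarrow> nat) \<Rightarrow> 'a set \<Rightarrow> 'a set" where
  "scaled_nbhd d m A = (\<Union>a\<in>A. pball P a (d (m a)) (inverse (real (Suc (m a))) / 2))"

lemma scaled_nbhd_open:
  assumes "P5 P" "op_continuous op"
  shows "scaled_nbhd d m A \<in> tauP P"
  unfolding scaled_nbhd_def
proof (rule tauP_Union)
  fix S
  assume "S \<in> (\<lambda>a. pball P a (d (m a)) (inverse (real (Suc (m a))) / 2)) ` A"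
  then show "S \<in> tauP P"
    using pball_open[OF assms] by auto
qed

lemma subset_scaled_nbhd:
  assumes "\<And>n. 0 < d n"
  shows "A \<subseteq> scaled_nbhd d m A"
proof
  fix a
  assume "a \<in> A"
  moreover have "a \<in> pball P a (d (m a)) (inverse (real (Suc (m a))) / 2)"
    using assms by (intro centre_in_pball) auto
  ultimately show "a \<in> scaled_nbhd d m A"
    unfolding scaled_nbhd_def by blast
qed

lemma scaled_nbhds_disjoint:
  assumes d: "decseq d" "\<And>k. op (d k) (d k) < inverse (real (Suc k))"
    and gapA: "\<And>a b. a \<in> A \<Longrightarrow> b \<in> B \<Longrightarrow> inverse (real (Suc (m a))) \<le> P a b (inverse (real (Suc (m a))))"
    and gapB: "\<And>b a. b \<in> B \<Longrightarrow> a \<in> A \<Longrightarrow> inverse (real (Suc (n b))) \<le> P b a (inverse (real (Suc (n b))))"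
  shows "scaled_nbhd d m A \<inter> scaled_nbhd d n B = {}"
proof (rule ccontr)
  assume "scaled_nbhd d m A \<inter> scaled_nbhd d n B \<noteq> {}"
  then obtain z a b where "a \<in> A" "b \<in> B"
    and za: "P a z (inverse (real (Suc (m a))) / 2) < d (m a)"
    and zb: "P b z (inverse (real (Suc (n b))) / 2) < d (n b)"
    unfolding scaled_nbhd_def pball_def by blast
  show False
  proof (cases "m a \<le> n b")
    case True
    with P_scale_less_of_common_point[OF d True za zb] gapA[OF \<open>a \<in> A\<close> \<open>b \<in> B\<close>] show False
      by linarith
  next
    case False
    then have "n b \<le> m a"
      by simp
    with P_scale_less_of_common_point[OF d this zb za] gapB[OF \<open>b \<in> B\<close> \<open>a \<in> A\<close>] show False
      by linarith
  qed
qed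

end

theorem mainTheorem11:
  fixes P :: "'a \<Rightarrow> 'a \<Rightarrow> real \<Rightarrow> real" and op :: "real \<Rightarrow> real \<Rightarrow> real"
  assumes "gen_param_metric P op" and "P5 P" and "op_continuous op"
    and "pclosed P A" and "pclosed P B" and "A \<inter> B = {}"
  shows "\<exists>U V. U \<in> tauP P \<and> V \<in> tauP P \<and> U \<inter> V = {} \<and> A \<subseteq> U \<and> B \<subseteq> V"
proof -
  interpret gen_param_metric_space P op
    using assms(1) by unfold_locales
  obtain d where d: "decseq d" "\<And>k. 0 < d k" "\<And>k. op (d k) (d k) < inverse (real (Suc k))"
    using exists_decseq_op_diag_less[OF assms(3)] by blast
  have "\<forall>a\<in>A. \<exists>k. \<forall>b\<in>B. inverse (real (Suc k)) \<le> P a b (inverse (real (Suc k)))"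
    using pclosed_scale_gap[OF assms(5)] assms(6) by blast
  then obtain m where m: "\<forall>a\<in>A. \<forall>b\<in>B. inverse (real (Suc (m a))) \<le> P a b (inverse (real (Suc (m a))))"
    by (auto dest!: bchoice)
  have "\<forall>b\<in>B. \<exists>k. \<forall>a\<in>A. inverse (real (Suc k)) \<le> P b a (inverse (real (Suc k)))"
    using pclosed_scale_gap[OF assms(4)] assms(6) by blast
  then obtain n where n: "\<forall>b\<in>B. \<forall>a\<in>A. inverse (real (Suc (n b))) \<le> P b a (inverse (real (Suc (n b))))"
    by (auto dest!: bchoice)
  show ?thesis
  proof (intro exI conjI)
    show "scaled_nbhd d m A \<in> tauP P" "scaled_nbhd d n B \<in> tauP P"
      using assms(2,3) by (rule scaled_nbhd_open)+
    show "A \<subseteq> scaled_nbhd d m A" "B \<subseteq> scaled_nbhd d n B"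
      using d(2) by (rule subset_scaled_nbhd)+
    show "scaled_nbhd d m A \<inter> scaled_nbhd d n B = {}"
      using m n by (intro scaled_nbhds_disjoint[OF d(1,3)]) auto
  qed
qed

end
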